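(* Let $\mathcal{X}_1,\mathcal{X}_2$ be non-empty sets, $\mathcal{B}_1\subseteq\mathcal{P}(\mathcal{X}_1)\setminus\{\emptyset\}$, $\mathcal{B}_2\subseteq\mathcal{P}(\mathcal{X}_2)\setminus\{\emptyset\}$ (arbitrary, possibly empty), and for $i\in\{1,2\}$ let $\underline{P}_i$ be a coherent conditional lower prevision on $\mathcal{C}_i\subseteq\mathcal{C}(\mathcal{X}_i)$ with natural extension $\underline{E}_i$ to $\mathcal{C}(\mathcal{X}_i)$. Then for any $f\in\mathcal{G}(\mathcal{X}_1)$ and $h\in\mathcal{G}(\mathcal{X}_2)$, $$(\underline{P}_1\otimes\underline{P}_2)(f+h)=\underline{E}_1(f)+\underline{E}_2(h).$$
   Context: Gambles on a non-empty set $\mathcal{X}$ are bounded real functions; $\mathcal{G}(\mathcal{X})$ is the set of gambles, $\mathcal{G}_{>0}(\mathcal{X})$ the non-negative non-zero gambles, $\mathbb{I}_A$ the indicator of $A$. For $\mathcal{A}\subseteq\mathcal{G}(\mathcal{X})$: $\mathrm{posi}(\mathcal{A}):=\{\sum_{i=1}^n\lambda_if_i\colon n\in\mathbb{N},\lambda_i>0,f_i\in\mathcal{A}\}$, $\mathcal{E}(\mathcal{A}):=\mathrm{posi}(\mathcal{A}\cup\mathcal{G}_{>0}(\mathcal{X}))$. A coherent set of desirable gambles $\mathcal{D}\subseteq\mathcal{G}(\mathcal{X})$ satisfies: (D1) $f\geq0,f\neq0\Rightarrow f\in\mathcal{D}$; (D2) $f\in\mathcal{D},\lambda>0\Rightarrow\lambda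 f\in\mathcal{D}$; (D3) $f,g\in\mathcal{D}\Rightarrow f+g\in\mathcal{D}$; (D4) $f\leq0\Rightarrow f\notin\mathcal{D}$. $\mathcal{C}(\mathcal{X}):=\mathcal{G}(\mathcal{X})\times(\mathcal{P}(\mathcal{X})\setminus\{\emptyset\})$; a conditional lower prevision on $\mathcal{C}\subseteq\mathcal{C}(\mathcal{X})$ is a map $(f,B)\mapsto\underline{P}(f\vert B)\in\mathbb{R}\cup\{\pm\infty\}$. For $\mathcal{D}\subseteq\mathcal{G}(\mathcal{X})$, $\underline{P}_{\mathcal{D}}(f\vert B):=\sup\{\mu\in\mathbb{R}\colon[f-\mu]\mathbb{I}_B\in\mathcal{D}\}$. $\underline{P}$ is coherent if $\underline{P}=\underline{P}_{\mathcal{D}}$ on its domain for some coherent set of desirable gambles $\mathcal{D}$. For coherent $\underline{P}$ on $\mathcal{C}$, $\mathcal{E}(\underline{P}):=\mathcal{E}(\{[f-\mu]\mathbb{I}_B\colon(f,B)\in\mathcal{C},\mu<\underline{P}(f\vert B)\})$ and its natural extension is $\underline{E}(f\vert B):=\underline{P}_{\mathcal{E}(\underline{P})}(f\vert B)$ for all $(f,B)\in\mathcal{C}(\mathcal{X})$. Unconditional notation: $\underline{P}(f):=\underline{P}(f\vert\mathcal{X})$. Gambles on $\mathcal{X}_i$ are identified with their cylindrical extensions to $\mathcal{X}_1\times\mathcal{X}_2$, events $B\subseteq\mathcal{X}_1$ with $B\times\mathcal{X}_2$ (similarly for $\mathcal{X}_2$). For coherent sets of desirable gambles $\mathcal{D}_1,\mathcal{D}_2$: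 $\mathcal{D}_1\otimes\mathcal{D}_2:=\mathcal{E}(\mathcal{A}_{1\to2}\cup\mathcal{A}_{2\to1})$, $\mathcal{A}_{1\to2}:=\{f_2(X_2)\mathbb{I}_{B_1}(X_1)\colon f_2\in\mathcal{D}_2,B_1\in\mathcal{B}_1\cup\{\mathcal{X}_1\}\}$, $\mathcal{A}_{2\to1}:=\{f_1(X_1)\mathbb{I}_{B_2}(X_2)\colon f_1\in\mathcal{D}_1,B_2\in\mathcal{B}_2\cup\{\mathcal{X}_2\}\}$. Then $(\underline{P}_1\otimes\underline{P}_2)(f\vert B):=\underline{P}_{\mathcal{D}}(f\vert B)$ for $(f,B)\in\mathcal{C}(\mathcal{X}_1\times\mathcal{X}_2)$ with $\mathcal{D}=\mathcal{E}(\underline{P}_1)\otimes\mathcal{E}(\underline{P}_2)$. *)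

theory Defs
  imports Complex_Main "HOL-Library.Extended_Real" "HOL-Library.Indicator_Function"
begin

text \<open>Possibility spaces are modelled as (automatically non-empty) types; the
  whole space is UNIV. Gambles are bounded real-valued functions.\<close>

definition gamble :: "('a \<Rightarrow> real) \<Rightarrow> bool" where
  "gamble f \<longleftrightarrow> (\<exists>c. \<forall>x. \<bar>f x\<bar> \<le> c)"

definition gambles :: "('a \<Rightarrow> real) set" where
  "gambles = {f. gamble f}"

definition gambles_pos :: "('a \<Rightarrow> real) set" where
  "gambles_pos = {f. gamble f \<and> (\<forall>x. f x \<ge> 0) \<and> f \<noteq> (\<lambda>x. 0)}"

definition posi :: "('a \<Rightarrow> real) set \<Rightarrow> ('a \<Rightarrow> real) set" where
  "posi A = {g. \<exists>(n::nat) (lam::nat \<Rightarrow> real) (fs::nat \<Rightarrow> 'a \<Rightarrow> real).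
      n > 0 \<and> (\<forall>i<n. lam i > 0 \<and> fs i \<in> A) \<and> g = (\<lambda>x. \<Sum>i<n. lam i * fs i x)}"

definition natext_set :: "('a \<Rightarrow> real) set \<Rightarrow> ('a \<Rightarrow> real) set" ("\<E>") where
  "\<E> A = posi (A \<union> gambles_pos)"

definition coherent_D :: "('a \<Rightarrow> real) set \<Rightarrow> bool" where
  "coherent_D D \<longleftrightarrow> D \<subseteq> gambles \<and>
     (\<forall>f. gamble f \<and> (\<forall>x. f x \<ge> 0) \<and> f \<noteq> (\<lambda>x. 0) \<longrightarrow> f \<in> D) \<and>
     (\<forall>f \<in> D. \<forall>c::real. c > 0 \<longrightarrow> (\<lambda>x. c * f x) \<in> D) \<and>
     (\<forall>f \<in> D. \<forall>g \<in> D. (\<lambda>x. f x + g x) \<in> D) \<and>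
     (\<forall>f. gamble f \<and> (\<forall>x. f x \<le> 0) \<longrightarrow> f \<notin> D)"

definition cond_domain :: "(('a \<Rightarrow> real) \<times> 'a set) set" where
  "cond_domain = {(f, B). gamble f \<and> B \<noteq> {}}"

text \<open>Lower prevision induced by a set of gambles: values in the extended reals
  (Sup of the empty set is -\<infinity>).\<close>
definition lowprev_D :: "('a \<Rightarrow> real) set \<Rightarrow> ('a \<Rightarrow> real) \<Rightarrow> 'a set \<Rightarrow> ereal" where
  "lowprev_D D f B = Sup {ereal \<mu> | \<mu>. (\<lambda>x. (f x - \<mu>) * indicator B x) \<in> D}"

definition coherent_lp :: "(('a \<Rightarrow> real) \<times> 'a set) set \<Rightarrow> (('a \<Rightarrow> real) \<Rightarrow> 'a set \<Rightarrow> ereal) \<Rightarrow> bool" where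
  "coherent_lp C P \<longleftrightarrow> C \<subseteq> cond_domain \<and>
     (\<exists>D. coherent_D D \<and> (\<forall>(f, B) \<in> C. P f B = lowprev_D D f B))"

definition E_lp :: "(('a \<Rightarrow> real) \<times> 'a set) set \<Rightarrow> (('a \<Rightarrow> real) \<Rightarrow> 'a set \<Rightarrow> ereal) \<Rightarrow> ('a \<Rightarrow> real) set" where
  "E_lp C P = \<E> {(\<lambda>x. (f x - \<mu>) * indicator B x) | f B \<mu>. (f, B) \<in> C \<and> ereal \<mu> < P f B}"

definition natext :: "(('a \<Rightarrow> real) \<times> 'a set) set \<Rightarrow> (('a \<Rightarrow> real) \<Rightarrow> 'a set \<Rightarrow> ereal) \<Rightarrow> ('a \<Rightarrow> real) \<Rightarrow> 'a set \<Rightarrow> ereal" where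
  "natext C P f B = lowprev_D (E_lp C P) f B"

text \<open>Independent product of coherent sets of desirable gambles w.r.t. the
  conditioning families B1, B2 (cylindrical extensions made explicit).\<close>
definition prod_D :: "'a set set \<Rightarrow> 'b set set \<Rightarrow> ('a \<Rightarrow> real) set \<Rightarrow> ('b \<Rightarrow> real) set
    \<Rightarrow> ('a \<times> 'b \<Rightarrow> real) set" where
  "prod_D B1 B2 D1 D2 = \<E>
     ({(\<lambda>(x, y). f2 y * indicator A1 x) | f2 A1. f2 \<in> D2 \<and> A1 \<in> B1 \<union> {UNIV}} \<union>
      {(\<lambda>(x, y). f1 x * indicator A2 y) | f1 A2. f1 \<in> D1 \<and> A2 \<in> B2 \<union> {UNIV}})"

definition prod_lp :: "'a set set \<Rightarrow> 'b set set
    \<Rightarrow> (('a \<Rightarrow> real) \<times> 'a set) set \<Rightarrow> (('a \<Rightarrow> real) \<Rightarrow> 'a set \<Rightarrow> ereal)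
    \<Rightarrow> (('b \<Rightarrow> real) \<times> 'b set) set \<Rightarrow> (('b \<Rightarrow> real) \<Rightarrow> 'b set \<Rightarrow> ereal)
    \<Rightarrow> ('a \<times> 'b \<Rightarrow> real) \<Rightarrow> ('a \<times> 'b) set \<Rightarrow> ereal" where
  "prod_lp B1 B2 C1 P1 C2 P2 f B = lowprev_D (prod_D B1 B2 (E_lp C1 P1) (E_lp C2 P2)) f B"

end

theory Submission
  imports Defs
begin

text \<open>If \<open>f + h - \<mu>\<close> is desirable in the independent product, it dominates a finite sum
  \<open>\<Sum>\<^sub>i X\<^sub>i(x) Y\<^sub>i(y)\<close> of products of gambles with non-negative lower previsions. A finite-dimensional
  Hahn--Banach argument yields, for each marginal, a linear prevision on the span of the gambles
  involved that dominates the lower prevision and equals it at \<open>f\<close> (resp. \<open>h\<close>). Integrating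
  out \<open>y\<close> and then \<open>x\<close> with these previsions gives \<open>\<mu> \<le> E\<^sub>1(f) + E\<^sub>2(h) - \<Sum>\<^sub>i P\<^sub>1(X\<^sub>i) P\<^sub>2(Y\<^sub>i)\<close>,
  and the subtracted sum is non-negative. Conversely \<open>f - \<mu>\<^sub>1\<close> and \<open>h - \<mu>\<^sub>2\<close> are themselves generators
  of the product for \<open>\<mu>\<^sub>1 < E\<^sub>1(f)\<close> and \<open>\<mu>\<^sub>2 < E\<^sub>2(h)\<close>.\<close>

lemma gamble_const: "gamble (\<lambda>x. c)"
  unfolding gamble_def by blast

lemma gamble_indicator: "gamble (indicator A :: _ \<Rightarrow> real)"
  unfolding gamble_def by (rule exI[of _ 1]) (simp add: indicator_def)

lemma gamble_add:
  assumes "gamble u" "gamble v" shows "gamble (\<lambda>x. u x + v x)"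
proof -
  obtain a b where "\<forall>x. \<bar>u x\<bar> \<le> a" "\<forall>x. \<bar>v x\<bar> \<le> b"
    using assms unfolding gamble_def by blast
  then have "\<forall>x. \<bar>u x + v x\<bar> \<le> a + b"
    by (meson abs_triangle_ineq add_mono order_trans)
  then show ?thesis unfolding gamble_def by blast
qed

lemma gamble_mult:
  assumes "gamble u" "gamble v" shows "gamble (\<lambda>x. u x * v x)"
proof -
  obtain a b where "\<forall>x. \<bar>u x\<bar> \<le> a" "\<forall>x. \<bar>v x\<bar> \<le> b"
    using assms unfolding gamble_def by blast
  then have "\<forall>x. \<bar>u x * v x\<bar> \<le> a * b"
    by (simp add: abs_mult mult_mono')
  then show ?thesis unfolding gamble_def by blast
qed

lemma gamble_cmult: "gamble u \<Longrightarrow> gamble (\<lambda>x. c * u x)"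
  using gamble_mult[OF gamble_const] .

lemma gamble_diff: "gamble u \<Longrightarrow> gamble v \<Longrightarrow> gamble (\<lambda>x. u x - v x)"
  using gamble_add[of u "\<lambda>x. - 1 * v x"] gamble_cmult[of v "- 1"] by simp

lemma gamble_sum: "(\<And>i. i \<in> I \<Longrightarrow> gamble (g i)) \<Longrightarrow> gamble (\<lambda>x. \<Sum>i\<in>I. g i x)"
  by (induction I rule: infinite_finite_induct) (auto intro: gamble_const gamble_add)

lemma posiI:
  fixes n :: nat
  assumes "0 < n" "\<forall>i<n. 0 < lam i \<and> fs i \<in> A"
  shows "(\<lambda>x. \<Sum>i<n. lam i * fs i x) \<in> posi A"
  unfolding posi_def mem_Collect_eq using assms
  by (intro exI[of _ n] exI[of _ lam] exI[of _ fs]) simp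

lemma posiE:
  assumes "g \<in> posi A"
  obtains n :: nat and lam fs where "0 < n" "\<forall>i<n. 0 < lam i \<and> fs i \<in> A"
    "g = (\<lambda>x. \<Sum>i<n. lam i * fs i x)"
  using assms unfolding posi_def by auto

lemma posi_generator: "u \<in> A \<Longrightarrow> u \<in> posi A"
  using posiI[of 1 "\<lambda>_. 1" "\<lambda>_. u"] by simp

lemma sum_lessThan_add:
  fixes g :: "nat \<Rightarrow> 'a::comm_monoid_add"
  shows "(\<Sum>i<n + m. g i) = (\<Sum>i<n. g i) + (\<Sum>i<m. g (n + i))"
  by (induction m) (simp_all add: add.assoc)

lemma posi_add:
  assumes "u \<in> posi A" "v \<in> posi A" shows "(\<lambda>x. u x + v x) \<in> posi A"
proof -
  obtain n :: nat and lam fs where n: "0 < n" "\<forall>i<n. 0 < lam i \<and> fs i \<in> A"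
    and u: "u = (\<lambda>x. \<Sum>i<n. lam i * fs i x)"
    using assms(1) by (rule posiE)
  obtain m :: nat and lam' fs' where m: "\<forall>i<m. 0 < lam' i \<and> fs' i \<in> A"
    and v: "v = (\<lambda>x. \<Sum>i<m. lam' i * fs' i x)"
    using assms(2) by (rule posiE)
  define L where "L i = (if i < n then lam i else lam' (i - n))" for i
  define F where "F i = (if i < n then fs i else fs' (i - n))" for i
  have "(\<lambda>x. \<Sum>i<n + m. L i * F i x) \<in> posi A"
    using n m by (intro posiI) (auto simp: L_def F_def)
  moreover have "(\<Sum>i<n + m. L i * F i x) = u x + v x" for x
    by (simp add: sum_lessThan_add u v L_def F_def)
  ultimately show ?thesis by simp
qed

lemma posi_cmult:
  assumes "u \<in> posi A" "0 < t" shows "(\<lambda>x. t * u x) \<in> posi A"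
proof -
  obtain n :: nat and lam fs where n: "0 < n" "\<forall>i<n. 0 < lam i \<and> fs i \<in> A"
    and u: "u = (\<lambda>x. \<Sum>i<n. lam i * fs i x)"
    using assms(1) by (rule posiE)
  have "(\<lambda>x. \<Sum>i<n. (t * lam i) * fs i x) \<in> posi A"
    using n assms(2) by (intro posiI) auto
  then show ?thesis by (simp add: u sum_distrib_left mult.assoc)
qed

lemma posi_least:
  assumes "A \<subseteq> D"
    and add: "\<And>u v. u \<in> D \<Longrightarrow> v \<in> D \<Longrightarrow> (\<lambda>x. u x + v x) \<in> D"
    and cmult: "\<And>u t. u \<in> D \<Longrightarrow> 0 < t \<Longrightarrow> (\<lambda>x. t * u x) \<in> D"
  shows "posi A \<subseteq> D"
proof
  fix g assume "g \<in> posi A"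
  then obtain n :: nat and lam fs where n: "0 < n" "\<forall>i<n. 0 < lam i \<and> fs i \<in> A"
    and g: "g = (\<lambda>x. \<Sum>i<n. lam i * fs i x)"
    by (rule posiE)
  have "(\<lambda>x. \<Sum>i<Suc k. lam i * fs i x) \<in> D" if "Suc k \<le> n" for k
    using that
  proof (induction k)
    case 0
    then show ?case using n(2) assms(1) cmult by auto
  next
    case (Suc k)
    then have "Suc k < n" by simp
    then have "(\<lambda>x. lam (Suc k) * fs (Suc k) x) \<in> D" using n(2) assms(1) cmult by blast
    from add[OF Suc.IH this] Suc.prems show ?case by simp
  qed
  from this[of "n - 1"] n(1) show "g \<in> D" by (simp add: g)
qed

section \<open>Lower previsions of coherent sets of desirable gambles\<close>

definition lower_prev :: "('a \<Rightarrow> real) set \<Rightarrow> ('a \<Rightarrow> real) \<Rightarrow> real" where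
  "lower_prev D u = Sup {\<mu>. (\<lambda>x. u x - \<mu>) \<in> D}"

lemma Sup_ereal_image_eq:
  fixes T :: "real set"
  assumes "{..<s} \<subseteq> T" "T \<subseteq> {..s}"
  shows "Sup (ereal ` T) = ereal s"
proof (rule Sup_eqI)
  show "y \<le> ereal s" if "y \<in> ereal ` T" for y
    using that assms(2) by auto
  show "ereal s \<le> z" if ub: "\<And>y. y \<in> ereal ` T \<Longrightarrow> y \<le> z" for z
  proof (rule dense_le)
    show "y \<le> z" if "y < ereal s" for y
      using that ub assms(1) by (cases y) auto
  qed
qed

context
  fixes D :: "('a \<Rightarrow> real) set"
  assumes D: "coherent_D D"
begin

lemma desirable_gamble: "u \<in> D \<Longrightarrow> gamble u"
  using D unfolding coherent_D_def gambles_def by auto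

lemma desirable_add: "u \<in> D \<Longrightarrow> v \<in> D \<Longrightarrow> (\<lambda>x. u x + v x) \<in> D"
  using D unfolding coherent_D_def by blast

lemma desirable_cmult: "u \<in> D \<Longrightarrow> 0 < t \<Longrightarrow> (\<lambda>x. t * u x) \<in> D"
  using D unfolding coherent_D_def by blast

lemma desirable_nonneg: "gamble u \<Longrightarrow> (\<And>x. 0 \<le> u x) \<Longrightarrow> u \<noteq> (\<lambda>x. 0) \<Longrightarrow> u \<in> D"
  using D unfolding coherent_D_def by blast

lemma not_desirable_nonpos:
  assumes "\<And>x. u x \<le> 0" shows "u \<notin> D"
proof
  assume u: "u \<in> D"
  then have "gamble u" by (rule desirable_gamble)
  with D assms u show False unfolding coherent_D_def by blast
qed

lemma desirable_shift:
  assumes "gamble u" "\<And>x. \<mu> < u x" shows "(\<lambda>x. u x - \<mu>) \<in> D"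
proof (rule desirable_nonneg)
  show "gamble (\<lambda>x. u x - \<mu>)" using assms(1) by (intro gamble_diff gamble_const)
  show "0 \<le> u x - \<mu>" for x using assms(2)[of x] by simp
  show "(\<lambda>x. u x - \<mu>) \<noteq> (\<lambda>x. 0)"
    using assms(2)[of undefined] by (auto dest: fun_cong[where x=undefined])
qed

lemma desirable_shift_mono:
  assumes "(\<lambda>x. u x - \<mu>) \<in> D" "\<mu>' < \<mu>" shows "(\<lambda>x. u x - \<mu>') \<in> D"
proof -
  have "(\<lambda>x. \<mu> - \<mu>') \<in> D"
    using assms(2) by (intro desirable_shift gamble_const) simp
  from desirable_add[OF assms(1) this] show ?thesis by simp
qed

lemma desirable_shift_less:
  assumes "(\<lambda>x. u x - \<mu>) \<in> D" "\<And>x. u x \<le> c" shows "\<mu> < c"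
proof (rule ccontr)
  assume "\<not> \<mu> < c"
  then have "u x - \<mu> \<le> 0" for x using assms(2)[of x] by linarith
  then have "(\<lambda>x. u x - \<mu>) \<notin> D" by (rule not_desirable_nonpos)
  with assms(1) show False by contradiction
qed

lemma lower_prev_upper:
  assumes "gamble u" "(\<lambda>x. u x - \<mu>) \<in> D" shows "\<mu> \<le> lower_prev D u"
proof -
  obtain c where c: "\<forall>x. \<bar>u x\<bar> \<le> c" using assms(1) unfolding gamble_def by blast
  have "\<mu>' \<le> c" if "(\<lambda>x. u x - \<mu>') \<in> D" for \<mu>'
    using desirable_shift_less[OF that, of c] c by (simp add: abs_le_iff)
  then have "bdd_above {\<mu>. (\<lambda>x. u x - \<mu>) \<in> D}" by (intro bdd_aboveI) blast
  with assms(2) show ?thesis unfolding lower_prev_def by (simp add: cSup_upper)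
qed

lemma lower_prev_least:
  assumes "gamble u" "\<And>\<mu>. (\<lambda>x. u x - \<mu>) \<in> D \<Longrightarrow> \<mu> \<le> c" shows "lower_prev D u \<le> c"
proof -
  obtain b where b: "\<forall>x. \<bar>u x\<bar> \<le> b" using assms(1) unfolding gamble_def by blast
  have "- b - 1 < u x" for x using b[rule_format, of x] by (simp add: abs_le_iff)
  then have "(\<lambda>x. u x - (- b - 1)) \<in> D" using assms(1) by (intro desirable_shift)
  then show ?thesis unfolding lower_prev_def using assms(2) by (intro cSup_least) auto
qed

lemma desirable_if_less_lower_prev:
  assumes "gamble u" "\<mu> < lower_prev D u" shows "(\<lambda>x. u x - \<mu>) \<in> D"
proof (rule ccontr)
  assume "(\<lambda>x. u x - \<mu>) \<notin> D"
  then have "lower_prev D u \<le> \<mu>"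
    using desirable_shift_mono by (intro lower_prev_least[OF assms(1)]) (meson not_le)
  with assms(2) show False by simp
qed

lemma lowprev_D_UNIV:
  assumes "gamble u" shows "lowprev_D D u UNIV = ereal (lower_prev D u)"
proof -
  have "{ereal \<mu> | \<mu>. (\<lambda>x. (u x - \<mu>) * indicator UNIV x) \<in> D}
      = ereal ` {\<mu>. (\<lambda>x. u x - \<mu>) \<in> D}"
    by auto
  also have "Sup \<dots> = ereal (lower_prev D u)"
    using desirable_if_less_lower_prev[OF assms] lower_prev_upper[OF assms]
    by (intro Sup_ereal_image_eq) auto
  finally show ?thesis unfolding lowprev_D_def .
qed

lemma lower_prev_nonneg_if_desirable: "u \<in> D \<Longrightarrow> 0 \<le> lower_prev D u"
  using lower_prev_upper[OF desirable_gamble, of u 0] by simp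

lemma lower_prev_const: "lower_prev D (\<lambda>x. c) = c"
proof (rule antisym)
  show "lower_prev D (\<lambda>x. c) \<le> c"
    using desirable_shift_less[where u="\<lambda>x. c" and c=c]
    by (intro lower_prev_least gamble_const less_imp_le) simp
  show "c \<le> lower_prev D (\<lambda>x. c)"
  proof (rule dense_le)
    fix \<mu> assume "\<mu> < c"
    then have "(\<lambda>x. c - \<mu>) \<in> D" using desirable_shift[OF gamble_const] by blast
    then show "\<mu> \<le> lower_prev D (\<lambda>x. c)" by (rule lower_prev_upper[OF gamble_const])
  qed
qed

lemma lower_prev_nonneg:
  assumes "gamble u" "\<And>x. 0 \<le> u x" shows "0 \<le> lower_prev D u"
proof (rule dense_le)
  fix \<mu> :: real assume "\<mu> < 0"
  then have "(\<lambda>x. u x - \<mu>) \<in> D"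
    using assms by (intro desirable_shift) (auto intro: order.strict_trans2)
  then show "\<mu> \<le> lower_prev D u" by (rule lower_prev_upper[OF assms(1)])
qed

lemma lower_prev_superadd:
  assumes "gamble u" "gamble v"
  shows "lower_prev D u + lower_prev D v \<le> lower_prev D (\<lambda>x. u x + v x)"
proof -
  have sum: "a + b \<le> lower_prev D (\<lambda>x. u x + v x)"
    if "(\<lambda>x. u x - a) \<in> D" "(\<lambda>x. v x - b) \<in> D" for a b
  proof (rule lower_prev_upper)
    show "gamble (\<lambda>x. u x + v x)" using assms by (rule gamble_add)
    show "(\<lambda>x. u x + v x - (a + b)) \<in> D"
      using desirable_add[OF that] by (simp add: algebra_simps)
  qed
  have "lower_prev D v \<le> lower_prev D (\<lambda>x. u x + v x) - a" if "(\<lambda>x. u x - a) \<in> D" for a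
    using sum[OF that] by (intro lower_prev_least[OF assms(2)]) (simp add: algebra_simps)
  then have "lower_prev D u \<le> lower_prev D (\<lambda>x. u x + v x) - lower_prev D v"
    by (intro lower_prev_least[OF assms(1)]) (simp add: algebra_simps)
  then show ?thesis by simp
qed

lemma lower_prev_cmult_ge:
  assumes "gamble u" "0 < t" shows "t * lower_prev D u \<le> lower_prev D (\<lambda>x. t * u x)"
proof -
  have "\<mu> \<le> lower_prev D (\<lambda>x. t * u x) / t" if "(\<lambda>x. u x - \<mu>) \<in> D" for \<mu>
  proof -
    have "(\<lambda>x. t * u x - t * \<mu>) \<in> D"
      using desirable_cmult[OF that assms(2)] by (simp add: algebra_simps)
    then have "t * \<mu> \<le> lower_prev D (\<lambda>x. t * u x)"
      by (rule lower_prev_upper[OF gamble_cmult[OF assms(1)]])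
    then show ?thesis using assms(2) by (simp add: pos_le_divide_eq mult.commute)
  qed
  then have "lower_prev D u \<le> lower_prev D (\<lambda>x. t * u x) / t"
    by (rule lower_prev_least[OF assms(1)])
  then show ?thesis using assms(2) by (simp add: pos_le_divide_eq mult.commute)
qed

lemma lower_prev_cmult:
  assumes "gamble u" "0 < t" shows "lower_prev D (\<lambda>x. t * u x) = t * lower_prev D u"
proof (rule antisym)
  have "inverse t * lower_prev D (\<lambda>x. t * u x) \<le> lower_prev D (\<lambda>x. inverse t * (t * u x))"
    using assms by (intro lower_prev_cmult_ge gamble_cmult) simp_all
  then show "lower_prev D (\<lambda>x. t * u x) \<le> t * lower_prev D u"
    using assms(2) by (simp add: field_simps)
qed (rule lower_prev_cmult_ge[OF assms])

end

lemma coherent_D_E_lp: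
  assumes "coherent_lp C P" shows "coherent_D (E_lp C P)"
proof -
  obtain D where D: "coherent_D D" and PD: "\<forall>(f, B) \<in> C. P f B = lowprev_D D f B"
    and C: "C \<subseteq> cond_domain"
    using assms unfolding coherent_lp_def by blast
  define A where "A = {(\<lambda>x. (f x - \<mu>) * indicator B x) | f B \<mu>. (f, B) \<in> C \<and> ereal \<mu> < P f B}"
  have E: "E_lp C P = posi (A \<union> gambles_pos)"
    unfolding E_lp_def natext_set_def A_def ..
  have "A \<subseteq> D"
  proof
    fix u assume "u \<in> A"
    then obtain f B \<mu> where u: "u = (\<lambda>x. (f x - \<mu>) * indicator B x)"
      and fB: "(f, B) \<in> C" and \<mu>: "ereal \<mu> < P f B"
      unfolding A_def by blast
    then have "ereal \<mu> < Sup {ereal \<mu>' | \<mu>'. (\<lambda>x. (f x - \<mu>') * indicator B x) \<in> D}"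
      using PD unfolding lowprev_D_def by auto
    then obtain \<mu>' where f\<mu>': "(\<lambda>x. (f x - \<mu>') * indicator B x) \<in> D" and "\<mu> < \<mu>'"
      by (auto simp: less_Sup_iff)
    obtain b where "b \<in> B" using fB C unfolding cond_domain_def by blast
    with \<open>\<mu> < \<mu>'\<close> have "(\<lambda>x. (\<mu>' - \<mu>) * indicator B x) \<in> D"
      by (intro desirable_nonneg[OF D] gamble_cmult gamble_indicator)
        (auto simp: fun_eq_iff indicator_def)
    from desirable_add[OF D f\<mu>' this] show "u \<in> D"
      by (simp add: u algebra_simps)
  qed
  moreover have "gambles_pos \<subseteq> D"
    using desirable_nonneg[OF D] unfolding gambles_pos_def by blast
  ultimately have E_D: "E_lp C P \<subseteq> D"
    unfolding E using desirable_add[OF D] desirable_cmult[OF D] by (intro posi_least) auto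
  show ?thesis
    unfolding coherent_D_def
  proof (intro conjI ballI allI impI)
    show "E_lp C P \<subseteq> gambles"
      using E_D desirable_gamble[OF D] unfolding gambles_def by blast
    show "u \<in> E_lp C P" if "gamble u \<and> (\<forall>x. 0 \<le> u x) \<and> u \<noteq> (\<lambda>x. 0)" for u
      using that unfolding E by (intro posi_generator) (simp add: gambles_pos_def)
    show "(\<lambda>x. t * u x) \<in> E_lp C P" if "u \<in> E_lp C P" "0 < t" for u t
      using that unfolding E by (rule posi_cmult)
    show "(\<lambda>x. u x + v x) \<in> E_lp C P" if "u \<in> E_lp C P" "v \<in> E_lp C P" for u v
      using that unfolding E by (rule posi_add)
    show "u \<notin> E_lp C P" if "gamble u \<and> (\<forall>x. u x \<le> 0)" for u
      using that E_D not_desirable_nonpos[OF D] by blast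
  qed
qed

section \<open>A finite-dimensional Hahn--Banach theorem\<close>

definition truncate :: "nat \<Rightarrow> (nat \<Rightarrow> real) \<Rightarrow> nat \<Rightarrow> real" where
  "truncate m c i = (if i < m then c i else 0)"

locale sublinear_functional =
  fixes \<phi> :: "(nat \<Rightarrow> real) \<Rightarrow> real"
  assumes subadd: "\<phi> (\<lambda>i. c i + d i) \<le> \<phi> c + \<phi> d"
    and pos_hom: "0 < t \<Longrightarrow> \<phi> (\<lambda>i. t * c i) = t * \<phi> c"
begin

definition dominated :: "nat \<Rightarrow> (nat \<Rightarrow> real) \<Rightarrow> bool" where
  "dominated m w \<longleftrightarrow> (\<forall>c. (\<Sum>i<m. w i * c i) \<le> \<phi> (truncate m c))"

lemma dominated_Suc:
  assumes dom: "dominated m w"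
    and unit: "\<And>u. u m = 1 \<or> u m = -1 \<Longrightarrow> (\<Sum>i<m. w i * u i) + s * u m \<le> \<phi> (truncate (Suc m) u)"
  shows "dominated (Suc m) (w(m := s))"
  unfolding dominated_def
proof
  fix c
  have sum: "(\<Sum>i<Suc m. (w(m := s)) i * c i) = (\<Sum>i<m. w i * c i) + s * c m"
    by simp
  show "(\<Sum>i<Suc m. (w(m := s)) i * c i) \<le> \<phi> (truncate (Suc m) c)"
  proof (cases "c m = 0")
    case True
    then have "truncate (Suc m) c = truncate m c"
      by (auto simp: truncate_def fun_eq_iff less_Suc_eq)
    with True dom show ?thesis unfolding sum dominated_def by simp
  next
    case False
    define t where "t = \<bar>c m\<bar>"
    define u where "u i = c i / t" for i
    have t: "0 < t" using False by (simp add: t_def)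
    have c: "c i = t * u i" for i using t by (simp add: u_def)
    have "u m = 1 \<or> u m = -1" using False by (auto simp: u_def t_def abs_if)
    then have "t * ((\<Sum>i<m. w i * u i) + s * u m) \<le> t * \<phi> (truncate (Suc m) u)"
      using t unit by simp
    also have "truncate (Suc m) c = (\<lambda>i. t * truncate (Suc m) u i)"
      by (simp add: c truncate_def fun_eq_iff)
    then have "t * \<phi> (truncate (Suc m) u) = \<phi> (truncate (Suc m) c)"
      using pos_hom[OF t] by simp
    finally show ?thesis
      unfolding sum c by (simp add: sum_distrib_left algebra_simps)
  qed
qed

text \<open>The Hahn--Banach step: a value for the new coordinate exists because every lower bound
  coming from \<open>u m = -1\<close> lies below every upper bound coming from \<open>v m = 1\<close>.\<close>

lemma dominated_Suc_ex:
  assumes dom: "dominated m w" shows "\<exists>s. dominated (Suc m) (w(m := s))"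
proof -
  let ?L = "\<lambda>u. \<Sum>i<m. w i * u i"
  have dom': "?L c \<le> \<phi> (truncate m c)" for c
    using dom unfolding dominated_def by blast
  have sep: "?L u - \<phi> (truncate (Suc m) u) \<le> \<phi> (truncate (Suc m) v) - ?L v"
    if "u m = -1" "v m = 1" for u v
  proof -
    have "?L u + ?L v = ?L (\<lambda>i. u i + v i)"
      by (simp add: sum.distrib algebra_simps)
    also have "\<dots> \<le> \<phi> (truncate m (\<lambda>i. u i + v i))"
      by (rule dom')
    also have "truncate m (\<lambda>i. u i + v i)
        = (\<lambda>i. truncate (Suc m) u i + truncate (Suc m) v i)"
      using that by (auto simp: truncate_def fun_eq_iff less_Suc_eq)
    also have "\<phi> \<dots> \<le> \<phi> (truncate (Suc m) u) + \<phi> (truncate (Suc m) v)"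
      by (rule subadd)
    finally show ?thesis by simp
  qed
  define V where "V = {?L u - \<phi> (truncate (Suc m) u) | u. u m = -1}"
  have "V \<noteq> {}" unfolding V_def by (auto intro: exI[of _ "\<lambda>_. -1"])
  moreover have "bdd_above V"
    using sep[of _ "\<lambda>_. 1"] unfolding V_def bdd_above_def by auto
  ultimately have "x \<le> Sup V" "Sup V \<le> \<phi> (truncate (Suc m) v) - ?L v"
    if "x \<in> V" "v m = 1" for x v
    using that sep unfolding V_def by (auto intro: cSup_upper cSup_least)
  then have "?L u + Sup V * u m \<le> \<phi> (truncate (Suc m) u)" if "u m = 1 \<or> u m = -1" for u
    using that unfolding V_def by fastforce
  then show ?thesis using dominated_Suc[OF dom] by blast
qed

lemma dominated_one: "dominated 1 (\<lambda>_. - \<phi> (\<lambda>i. if i = 0 then -1 else 0))"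
proof -
  define a where "a = - \<phi> (\<lambda>i. if i = 0 then -1 else 0)"
  have zero: "\<phi> (\<lambda>i. 0) = 0"
    using pos_hom[of 2 "\<lambda>i. 0"] by simp
  have "\<phi> (\<lambda>i. 0) \<le> \<phi> (\<lambda>i. if i = 0 then 1 else 0) + \<phi> (\<lambda>i. if i = 0 then -1 else 0)"
    using subadd[of "\<lambda>i. if i = 0 then 1 else 0" "\<lambda>i. if i = 0 then -1 else 0"]
    by (simp add: if_distrib cong: if_cong)
  then have "a \<le> \<phi> (\<lambda>i. if i = 0 then 1 else 0)" by (simp add: a_def zero)
  then have "(\<Sum>i<0. a * u i) + a * u 0 \<le> \<phi> (truncate (Suc 0) u)"
    if u: "u 0 = 1 \<or> u 0 = -1" for u
  proof -
    consider "u 0 = 1" | "u 0 = -1" using u by blast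
    then show ?thesis
    proof cases
      case 1
      then have "truncate (Suc 0) u = (\<lambda>i. if i = 0 then 1 else 0)"
        by (auto simp: truncate_def fun_eq_iff)
      with 1 \<open>a \<le> _\<close> show ?thesis by simp
    next
      case 2
      then have "truncate (Suc 0) u = (\<lambda>i. if i = 0 then -1 else 0)"
        by (auto simp: truncate_def fun_eq_iff)
      with 2 show ?thesis by (simp add: a_def)
    qed
  qed
  moreover have "dominated 0 (\<lambda>_. a)"
    unfolding dominated_def truncate_def by (simp add: zero)
  ultimately have "dominated 1 ((\<lambda>_. a)(0 := a))"
    using dominated_Suc[of 0 "\<lambda>_. a" a] by simp
  then show ?thesis by (simp add: a_def fun_upd_idem)
qed

theorem hahn_banach:
  "\<exists>w. w 0 = - \<phi> (\<lambda>i. if i = 0 then -1 else 0) \<and> dominated (Suc k) w"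
proof (induction k)
  case 0
  show ?case using dominated_one by auto
next
  case (Suc k)
  then obtain w where "w 0 = - \<phi> (\<lambda>i. if i = 0 then -1 else 0)" "dominated (Suc k) w"
    by blast
  moreover obtain s where "dominated (Suc (Suc k)) (w(Suc k := s))"
    using dominated_Suc_ex[OF \<open>dominated (Suc k) w\<close>] by blast
  ultimately show ?case by (metis fun_upd_other nat.distinct(1))
qed

end

section \<open>Linear previsions dominating a lower prevision\<close>

lemma sum_delta_mult:
  fixes f :: "nat \<Rightarrow> real"
  shows "i < n \<Longrightarrow> (\<Sum>j<n. (if j = i then 1 else 0) * f j) = f i"
  by (simp add: if_distrib[of "\<lambda>z. z * _"] cong: if_cong)

lemma sublinear_functional_upper_prev:
  fixes D :: "('a \<Rightarrow> real) set" and g :: "nat \<Rightarrow> 'a \<Rightarrow> real"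
  assumes D: "coherent_D D" and g: "\<And>k. k < N \<Longrightarrow> gamble (g k)"
  shows "sublinear_functional (\<lambda>c. - lower_prev D (\<lambda>x. \<Sum>k<N. - c k * g k x))"
proof
  define G where "G c = (\<lambda>x. \<Sum>k<N. - c k * g k x)" for c
  have G: "gamble (G c)" for c
    unfolding G_def using g by (intro gamble_sum gamble_cmult) auto
  show "- lower_prev D (G (\<lambda>i. c i + d i)) \<le> - lower_prev D (G c) + - lower_prev D (G d)" for c d
  proof -
    have "G (\<lambda>i. c i + d i) = (\<lambda>x. G c x + G d x)"
      unfolding G_def by (simp add: fun_eq_iff left_diff_distrib sum_subtractf sum_negf)
    then show ?thesis using lower_prev_superadd[OF D G G, of c d] by simp
  qed
  show "- lower_prev D (G (\<lambda>i. t * c i)) = t * - lower_prev D (G c)" if "0 < t" for t c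
  proof -
    have "G (\<lambda>i. t * c i) = (\<lambda>x. t * G c x)"
      unfolding G_def by (simp add: fun_eq_iff algebra_simps sum_distrib_left)
    then show ?thesis using lower_prev_cmult[OF D G that] by simp
  qed
qed

lemma lower_prev_dominated_by_linear:
  fixes D :: "('a \<Rightarrow> real) set" and g :: "nat \<Rightarrow> 'a \<Rightarrow> real"
  assumes D: "coherent_D D" and g: "\<And>k. k < N \<Longrightarrow> gamble (g k)" and "0 < N"
  shows "\<exists>w. w 0 = lower_prev D (g 0) \<and>
    (\<forall>c. lower_prev D (\<lambda>x. \<Sum>k<N. c k * g k x) \<le> (\<Sum>k<N. c k * w k))"
proof -
  define G where "G c = (\<lambda>x. \<Sum>k<N. c k * g k x)" for c
  define \<phi> where "\<phi> c = - lower_prev D (\<lambda>x. \<Sum>k<N. - c k * g k x)" for c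
  interpret sublinear_functional \<phi>
    unfolding \<phi>_def using D g by (rule sublinear_functional_upper_prev)
  have \<phi>: "\<phi> c = - lower_prev D (G (\<lambda>k. - c k))" for c
    unfolding \<phi>_def G_def by simp
  obtain w where w0: "w 0 = - \<phi> (\<lambda>i. if i = 0 then -1 else 0)" and "dominated (Suc (N - 1)) w"
    using hahn_banach by blast
  then have dom: "(\<Sum>k<N. w k * c k) \<le> \<phi> (truncate N c)" for c
    using \<open>0 < N\<close> unfolding dominated_def by simp
  have "G (\<lambda>k. - truncate N c k) = G (\<lambda>k. - c k)" for c
    unfolding G_def truncate_def by simp
  then have "lower_prev D (G c) \<le> (\<Sum>k<N. c k * w k)" for c
    using dom[of "\<lambda>k. - c k"] unfolding \<phi> by (simp add: sum_negf mult.commute)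
  moreover have "G (\<lambda>k. - (if k = 0 then -1 else 0)) = g 0"
  proof
    fix x
    have "G (\<lambda>k. - (if k = 0 then -1 else 0)) x = (\<Sum>k<N. (if k = 0 then 1 else 0) * g k x)"
      unfolding G_def by (rule sum.cong) auto
    also have "\<dots> = g 0 x" using \<open>0 < N\<close> by (rule sum_delta_mult)
    finally show "G (\<lambda>k. - (if k = 0 then -1 else 0)) x = g 0 x" .
  qed
  ultimately show ?thesis
    using w0 unfolding \<phi> G_def by auto
qed

text \<open>The weights \<open>w\<close> are the values at the \<open>Y i\<close> of a linear prevision on the span of \<open>h\<close>, \<open>1\<close>
  and the \<open>Y i\<close> that dominates \<open>lower_prev D\<close> and agrees with it at \<open>h\<close>.\<close>

lemma lower_prev_linear_bound:
  fixes D :: "('a \<Rightarrow> real) set" and Y :: "nat \<Rightarrow> 'a \<Rightarrow> real"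
  assumes D: "coherent_D D" and h: "gamble h"
    and Y: "\<And>i. i < n \<Longrightarrow> gamble (Y i) \<and> 0 \<le> lower_prev D (Y i)"
  shows "\<exists>w. (\<forall>i<n. 0 \<le> w i) \<and> (\<forall>a b. (\<forall>y. (\<Sum>i<n. b i * Y i y) \<le> h y + a)
           \<longrightarrow> (\<Sum>i<n. b i * w i) \<le> lower_prev D h + a)"
proof -
  define g where "g k = (case k of 0 \<Rightarrow> h | Suc 0 \<Rightarrow> (\<lambda>_. 1) | Suc (Suc i) \<Rightarrow> Y i)" for k
  define coef :: "real \<Rightarrow> real \<Rightarrow> (nat \<Rightarrow> real) \<Rightarrow> nat \<Rightarrow> real" where
    "coef c0 c1 b k = (case k of 0 \<Rightarrow> c0 | Suc 0 \<Rightarrow> c1 | Suc (Suc i) \<Rightarrow> b i)" for c0 c1 b k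
  have "gamble (g k)" if "k < Suc (Suc n)" for k
    using that h Y by (auto simp: g_def gamble_const split: nat.split)
  then obtain v where v0: "v 0 = lower_prev D h"
    and dom: "\<And>c. lower_prev D (\<lambda>y. \<Sum>k<Suc (Suc n). c k * g k y) \<le> (\<Sum>k<Suc (Suc n). c k * v k)"
    using lower_prev_dominated_by_linear[OF D, of "Suc (Suc n)" g] by (auto simp: g_def)
  have span: "lower_prev D (\<lambda>y. c0 * h y + c1 + (\<Sum>i<n. b i * Y i y))
      \<le> c0 * v 0 + c1 * v (Suc 0) + (\<Sum>i<n. b i * v (Suc (Suc i)))" for c0 c1 b
    using dom[of "coef c0 c1 b"]
    by (simp add: coef_def g_def sum.lessThan_Suc_shift add.assoc del: sum.lessThan_Suc)
  have "v (Suc 0) = 1"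
    using span[of 0 1 "\<lambda>_. 0"] span[of 0 "-1" "\<lambda>_. 0"] lower_prev_const[OF D] by simp
  moreover have "0 \<le> v (Suc (Suc i))" if "i < n" for i
  proof -
    have "(\<lambda>y. 0 * h y + 0 + (\<Sum>j<n. (if j = i then 1 else 0) * Y j y)) = Y i"
      using sum_delta_mult[OF that] by (simp only: fun_eq_iff) simp
    then show ?thesis
      using span[of 0 0 "\<lambda>j. if j = i then 1 else 0"] Y[OF that] sum_delta_mult[OF that] by simp
  qed
  moreover have "(\<Sum>i<n. b i * v (Suc (Suc i))) \<le> lower_prev D h + a"
    if bound: "\<forall>y. (\<Sum>i<n. b i * Y i y) \<le> h y + a" for a b
  proof -
    have "gamble (\<lambda>y. 1 * h y + a + (\<Sum>i<n. - b i * Y i y))"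
      using h Y by (intro gamble_add gamble_cmult gamble_const gamble_sum) auto
    then have "0 \<le> lower_prev D (\<lambda>y. 1 * h y + a + (\<Sum>i<n. - b i * Y i y))"
      using bound by (intro lower_prev_nonneg[OF D]) (simp_all add: sum_negf)
    with span[of 1 a "\<lambda>i. - b i"] \<open>v (Suc 0) = 1\<close> v0 show ?thesis
      by (simp add: sum_negf)
  qed
  ultimately show ?thesis by (intro exI[of _ "\<lambda>i. v (Suc (Suc i))"]) auto
qed

section \<open>The independent product\<close>

definition prod_generators :: "'a set set \<Rightarrow> 'b set set \<Rightarrow> ('a \<Rightarrow> real) set \<Rightarrow> ('b \<Rightarrow> real) set
    \<Rightarrow> ('a \<times> 'b \<Rightarrow> real) set" where
  "prod_generators B1 B2 D1 D2 =
     {(\<lambda>(x, y). f2 y * indicator A1 x) | f2 A1. f2 \<in> D2 \<and> A1 \<in> B1 \<union> {UNIV}} \<union>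
     {(\<lambda>(x, y). f1 x * indicator A2 y) | f1 A2. f1 \<in> D1 \<and> A2 \<in> B2 \<union> {UNIV}}"

lemma prod_D_eq_posi: "prod_D B1 B2 D1 D2 = posi (prod_generators B1 B2 D1 D2 \<union> gambles_pos)"
  unfolding prod_D_def prod_generators_def natext_set_def ..

lemma prod_generator_dominates_product:
  fixes D1 :: "('a \<Rightarrow> real) set" and D2 :: "('b \<Rightarrow> real) set"
  assumes D1: "coherent_D D1" and D2: "coherent_D D2"
    and q: "q \<in> prod_generators B1 B2 D1 D2 \<union> gambles_pos"
  shows "\<exists>X Y. gamble X \<and> 0 \<le> lower_prev D1 X \<and> gamble Y \<and> 0 \<le> lower_prev D2 Y
    \<and> (\<forall>x y. X x * Y y \<le> q (x, y))"
proof -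
  have ind1: "0 \<le> lower_prev D1 (indicator A)" for A
    by (rule lower_prev_nonneg[OF D1 gamble_indicator]) simp
  have ind2: "0 \<le> lower_prev D2 (indicator A)" for A
    by (rule lower_prev_nonneg[OF D2 gamble_indicator]) simp
  consider (left) f2 A1 where "q = (\<lambda>(x, y). f2 y * indicator A1 x)" "f2 \<in> D2"
    | (right) f1 A2 where "q = (\<lambda>(x, y). f1 x * indicator A2 y)" "f1 \<in> D1"
    | (pos) "q \<in> gambles_pos"
    using q unfolding prod_generators_def by blast
  then show ?thesis
  proof cases
    case left
    then show ?thesis
      using ind1 lower_prev_nonneg_if_desirable[OF D2] desirable_gamble[OF D2] gamble_indicator
      by (intro exI[of _ "indicator A1"] exI[of _ f2]) (simp add: mult.commute)
  next
    case right
    then show ?thesis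
      using lower_prev_nonneg_if_desirable[OF D1] ind2 desirable_gamble[OF D1] gamble_indicator
      by (intro exI[of _ f1] exI[of _ "indicator A2"]) simp
  next
    case pos
    then show ?thesis
      using lower_prev_const[OF D1, of 0] lower_prev_const[OF D2, of 0]
      by (intro exI[of _ "\<lambda>_. 0"]) (simp add: gambles_pos_def gamble_const)
  qed
qed

lemma prod_D_dominates_sum_of_products:
  fixes D1 :: "('a \<Rightarrow> real) set" and D2 :: "('b \<Rightarrow> real) set"
  assumes D1: "coherent_D D1" and D2: "coherent_D D2" and u: "u \<in> prod_D B1 B2 D1 D2"
  shows "\<exists>(n::nat) X Y. (\<forall>i<n. gamble (X i) \<and> 0 \<le> lower_prev D1 (X i))
    \<and> (\<forall>i<n. gamble (Y i) \<and> 0 \<le> lower_prev D2 (Y i))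
    \<and> (\<forall>x y. (\<Sum>i<n. X i x * Y i y) \<le> u (x, y))"
proof -
  obtain n :: nat and lam fs where lam: "\<forall>i<n. 0 < lam i \<and> fs i \<in> prod_generators B1 B2 D1 D2 \<union> gambles_pos"
    and u_eq: "u = (\<lambda>p. \<Sum>i<n. lam i * fs i p)"
    using u unfolding prod_D_eq_posi by (rule posiE)
  have "\<forall>i. \<exists>X Y. i < n \<longrightarrow> gamble X \<and> 0 \<le> lower_prev D1 X \<and> gamble Y \<and> 0 \<le> lower_prev D2 Y
      \<and> (\<forall>x y. X x * Y y \<le> fs i (x, y))"
    using lam prod_generator_dominates_product[OF D1 D2] by blast
  then obtain X Y where XY: "\<And>i. i < n \<Longrightarrow> gamble (X i) \<and> 0 \<le> lower_prev D1 (X i)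
      \<and> gamble (Y i) \<and> 0 \<le> lower_prev D2 (Y i) \<and> (\<forall>x y. X i x * Y i y \<le> fs i (x, y))"
    by metis
  have "gamble (\<lambda>x. lam i * X i x) \<and> 0 \<le> lower_prev D1 (\<lambda>x. lam i * X i x)" if "i < n" for i
    using XY[OF that] lam that by (simp add: gamble_cmult lower_prev_cmult[OF D1] less_imp_le)
  moreover have "(\<Sum>i<n. lam i * X i x * Y i y) \<le> u (x, y)" for x y
    unfolding u_eq using XY lam
    by (auto intro!: sum_mono simp: mult.assoc mult_left_mono less_imp_le)
  ultimately show ?thesis
    using XY by (intro exI[where x=n] exI[where x="\<lambda>i x. lam i * X i x"] exI[where x=Y]) auto
qed

lemma le_lower_prev_add_if_prod_D:
  fixes D1 :: "('a \<Rightarrow> real) set" and D2 :: "('b \<Rightarrow> real) set"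
  assumes D1: "coherent_D D1" and D2: "coherent_D D2" and f: "gamble f" and h: "gamble h"
    and mem: "(\<lambda>(x, y). f x + h y - \<mu>) \<in> prod_D B1 B2 D1 D2"
  shows "\<mu> \<le> lower_prev D1 f + lower_prev D2 h"
proof -
  obtain n :: nat and X Y where X: "\<And>i. i < n \<Longrightarrow> gamble (X i) \<and> 0 \<le> lower_prev D1 (X i)"
    and Y: "\<And>i. i < n \<Longrightarrow> gamble (Y i) \<and> 0 \<le> lower_prev D2 (Y i)"
    and XY: "\<And>x y. (\<Sum>i<n. X i x * Y i y) \<le> f x + h y - \<mu>"
    using prod_D_dominates_sum_of_products[OF D1 D2 mem] by auto
  obtain w2 where w2: "\<forall>i<n. 0 \<le> w2 i" and bound2: "\<forall>a b. (\<forall>y. (\<Sum>i<n. b i * Y i y) \<le> h y + a)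
      \<longrightarrow> (\<Sum>i<n. b i * w2 i) \<le> lower_prev D2 h + a"
    using lower_prev_linear_bound[where D=D2 and h=h and n=n and Y=Y] D2 h Y by blast
  have "(\<Sum>i<n. X i x * w2 i) \<le> lower_prev D2 h + (f x - \<mu>)" for x
    using XY by (intro bound2[rule_format]) (simp add: algebra_simps)
  then have "(\<Sum>i<n. w2 i * X i x) \<le> f x + (lower_prev D2 h - \<mu>)" for x
    by (simp add: mult.commute algebra_simps)
  moreover obtain w1 where w1: "\<forall>i<n. 0 \<le> w1 i" and bound1: "\<forall>a b. (\<forall>x. (\<Sum>i<n. b i * X i x) \<le> f x + a)
      \<longrightarrow> (\<Sum>i<n. b i * w1 i) \<le> lower_prev D1 f + a"
    using lower_prev_linear_bound[where D=D1 and h=f and n=n and Y=X] D1 f X by blast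
  ultimately have "(\<Sum>i<n. w2 i * w1 i) \<le> lower_prev D1 f + (lower_prev D2 h - \<mu>)"
    using bound1[rule_format, where a="lower_prev D2 h - \<mu>" and b=w2] by blast
  moreover have "0 \<le> (\<Sum>i<n. w2 i * w1 i)"
    using w1 w2 by (intro sum_nonneg) simp
  ultimately show ?thesis by simp
qed

lemma prod_D_mem_if_less_lower_prev:
  fixes D1 :: "('a \<Rightarrow> real) set" and D2 :: "('b \<Rightarrow> real) set"
  assumes D1: "coherent_D D1" and D2: "coherent_D D2" and f: "gamble f" and h: "gamble h"
    and "\<mu>1 < lower_prev D1 f" "\<mu>2 < lower_prev D2 h"
  shows "(\<lambda>(x, y). f x + h y - (\<mu>1 + \<mu>2)) \<in> prod_D B1 B2 D1 D2"
proof -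
  have "(\<lambda>(x, y). (f x - \<mu>1) * indicator UNIV y) \<in> prod_generators B1 B2 D1 D2"
    unfolding prod_generators_def using desirable_if_less_lower_prev[OF D1 f assms(5)]
    by (intro UnI2 CollectI exI[of _ "\<lambda>x. f x - \<mu>1"] exI[of _ UNIV]) simp
  moreover have "(\<lambda>(x, y). (h y - \<mu>2) * indicator UNIV x) \<in> prod_generators B1 B2 D1 D2"
    unfolding prod_generators_def using desirable_if_less_lower_prev[OF D2 h assms(6)]
    by (intro UnI1 CollectI exI[of _ "\<lambda>y. h y - \<mu>2"] exI[of _ UNIV]) simp
  ultimately have "(\<lambda>p. (case p of (x, y) \<Rightarrow> (f x - \<mu>1) * indicator UNIV y)
      + (case p of (x, y) \<Rightarrow> (h y - \<mu>2) * indicator UNIV x)) \<in> prod_D B1 B2 D1 D2"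
    unfolding prod_D_eq_posi by (intro posi_add posi_generator UnI1)
  then show ?thesis by (simp add: case_prod_beta' algebra_simps)
qed

lemma lowprev_prod_D_sum:
  fixes D1 :: "('a \<Rightarrow> real) set" and D2 :: "('b \<Rightarrow> real) set"
  assumes D1: "coherent_D D1" and D2: "coherent_D D2" and f: "gamble f" and h: "gamble h"
  shows "lowprev_D (prod_D B1 B2 D1 D2) (\<lambda>(x, y). f x + h y) UNIV
    = ereal (lower_prev D1 f + lower_prev D2 h)"
proof -
  define s where "s = lower_prev D1 f + lower_prev D2 h"
  define T where "T = {\<mu>. (\<lambda>(x, y). f x + h y - \<mu>) \<in> prod_D B1 B2 D1 D2}"
  have "T \<subseteq> {..s}"
    unfolding T_def s_def using le_lower_prev_add_if_prod_D[OF D1 D2 f h] by auto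
  moreover have "\<mu> \<in> T" if "\<mu> < s" for \<mu>
    using prod_D_mem_if_less_lower_prev[OF D1 D2 f h,
        of "lower_prev D1 f - (s - \<mu>) / 2" "lower_prev D2 h - (s - \<mu>) / 2"] that
    unfolding T_def s_def by simp
  ultimately have "Sup (ereal ` T) = ereal s"
    by (intro Sup_ereal_image_eq) auto
  moreover have "{ereal \<mu> | \<mu>. (\<lambda>p. ((\<lambda>(x, y). f x + h y) p - \<mu>) * indicator UNIV p)
      \<in> prod_D B1 B2 D1 D2} = ereal ` T"
    unfolding T_def by (auto simp: case_prod_beta')
  ultimately show ?thesis unfolding lowprev_D_def s_def by simp
qed

theorem corollary23:
  fixes B1 :: "'a set set" and B2 :: "'b set set"
    and C1 :: "(('a \<Rightarrow> real) \<times> 'a set) set" and P1 :: "('a \<Rightarrow> real) \<Rightarrow> 'a set \<Rightarrow> ereal"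
    and C2 :: "(('b \<Rightarrow> real) \<times> 'b set) set" and P2 :: "('b \<Rightarrow> real) \<Rightarrow> 'b set \<Rightarrow> ereal"
    and f :: "'a \<Rightarrow> real" and h :: "'b \<Rightarrow> real"
  assumes "B1 \<subseteq> Pow UNIV - {{}}" and "B2 \<subseteq> Pow UNIV - {{}}"
    and "coherent_lp C1 P1" and "coherent_lp C2 P2"
    and "gamble f" and "gamble h"
  shows "prod_lp B1 B2 C1 P1 C2 P2 (\<lambda>(x, y). f x + h y) UNIV
           = natext C1 P1 f UNIV + natext C2 P2 h UNIV"
proof -
  have D1: "coherent_D (E_lp C1 P1)" using assms(3) by (rule coherent_D_E_lp)
  have D2: "coherent_D (E_lp C2 P2)" using assms(4) by (rule coherent_D_E_lp)
  show ?thesis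
    unfolding prod_lp_def natext_def
    using lowprev_prod_D_sum[OF D1 D2 assms(5,6)]
      lowprev_D_UNIV[OF D1 assms(5)] lowprev_D_UNIV[OF D2 assms(6)]
    by simp
qed

end
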